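(* Let $C$ be a subset of $Ob(CC(R,LM))$ closed under $ft$, and let $\le$ be a transitive relation on $C$ such that (1) $\Gamma\le\Gamma'$ implies $l(\Gamma)=l(\Gamma')$, and (2) for $\Gamma\in C$ and $F\in C$ with $ft(\Gamma)\le F$, one has $\sigma(\Gamma,F)\in C$ and $\Gamma\le\sigma(\Gamma,F)$. Then for $\Gamma\in C$ and $F\in C$ with $ft^i(\Gamma)\le F$ for some $i\ge1$, one has $\Gamma\le\sigma(\Gamma,F)$.
   Context: $[n]=\{1,\dots,n\}$; $R$ is a monad on Sets and $LM$ a left $R$-module with values in Sets. $Ob(CC(R,LM))$ is the set of finite sequences $(T_1,\dots,T_n)$, $n\ge0$, with $T_j\in LM([j-1])$; $l(T_1,\dots,T_n)=n$; $ft(T_1,\dots,T_n)=(T_1,\dots,T_{n-1})$ for $n\ge1$ and $ft()=()$. For $\Gamma=(T_1,\dots,T_{n+k})$ with $k>0$ and $\Gamma'=(T'_1,\dots,T'_n)$, $\sigma(\Gamma,\Gamma'):=(T'_1,\dots,T'_n,T_{n+1},\dots,T_{n+k})$ (defined only when $l(\Gamma)>l(\Gamma')$). *)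

theory Defs
  imports Main
begin

(* LM n  stands for the set LM([n]).  An object (T_1,...,T_n) is a list whose
   0-indexed entry j (= T_(j+1)) lies in LM([j]). *)
definition CC_Ob :: "(nat \<Rightarrow> 'a set) \<Rightarrow> 'a list set" where
  "CC_Ob LM = {Ts. \<forall>j < length Ts. Ts ! j \<in> LM j}"

definition CC_l :: "'a list \<Rightarrow> nat" where
  "CC_l Ts = length Ts"

definition CC_ft :: "'a list \<Rightarrow> 'a list" where
  "CC_ft Ts = butlast Ts"

(* sigma(Gamma,Gamma') = (T'_1..T'_n, T_(n+1)..T_(n+k)); only meaningful when
   CC_l Gamma > CC_l Gamma' *)
definition CC_sigma :: "'a list \<Rightarrow> 'a list \<Rightarrow> 'a list" where
  "CC_sigma Gamma Gamma' = Gamma' @ drop (length Gamma') Gamma"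

end

theory Submission
  imports Defs
begin

text \<open>If \<open>ft\<^sup>i\<^sup>+\<^sup>1(\<Gamma>) \<le> F\<close> and \<open>l(F) < l(ft \<Gamma>)\<close>, the induction
  hypothesis applied to \<open>ft \<Gamma>\<close> gives \<open>ft \<Gamma> \<le> \<sigma>(ft \<Gamma>, F)\<close>, so the basic hypothesis yields
  \<open>\<Gamma> \<le> \<sigma>(\<Gamma>, \<sigma>(ft \<Gamma>, F))\<close>, and \<open>\<sigma>(\<Gamma>, \<sigma>(ft \<Gamma>, F)) = \<sigma>(\<Gamma>, F)\<close>. Otherwise \<open>l(F) = l(ft \<Gamma>)\<close>,
  so \<open>ft\<^sup>i\<^sup>+\<^sup>1(\<Gamma>) = ft \<Gamma>\<close> and the basic hypothesis applies directly.\<close>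

lemma funpow_CC_ft: "(CC_ft ^^ i) xs = take (length xs - i) xs"
  by (induction i) (auto simp: CC_ft_def butlast_take)

lemma funpow_CC_ft_closed:
  assumes "\<And>G. G \<in> C \<Longrightarrow> CC_ft G \<in> C" and "G \<in> C"
  shows "(CC_ft ^^ k) G \<in> C"
  using assms by (induction k) auto

lemma funpow_Suc_CC_ft_eq_CC_ft:
  assumes "CC_l (CC_ft G) \<le> CC_l ((CC_ft ^^ Suc k) G)"
  shows "(CC_ft ^^ Suc k) G = CC_ft G"
proof -
  have "length G - Suc k = length G - 1"
    using assms by (simp add: funpow_CC_ft CC_l_def CC_ft_def)
  then show ?thesis by (simp add: funpow_CC_ft CC_ft_def butlast_conv_take)
qed

lemma CC_sigma_CC_sigma_CC_ft:
  assumes "CC_l F < CC_l (CC_ft G)"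
  shows "CC_sigma G (CC_sigma (CC_ft G) F) = CC_sigma G F"
proof -
  have tail: "drop (length F) G \<noteq> []" using assms by (simp add: CC_l_def CC_ft_def)
  have "CC_sigma G (CC_sigma (CC_ft G) F) = F @ butlast (drop (length F) G) @ drop (length G - 1) G"
    using assms by (simp add: CC_sigma_def CC_ft_def CC_l_def drop_butlast)
  also have "drop (length G - 1) G = [last G]"
    using tail by (cases G rule: rev_cases) auto
  also have "butlast (drop (length F) G) @ [last G] = drop (length F) G"
    using append_butlast_last_id[OF tail] last_drop[of "length F" G] assms
    by (simp add: CC_l_def CC_ft_def)
  finally show ?thesis by (simp add: CC_sigma_def)
qed

lemma le_CC_sigma_of_le_funpow_CC_ft:
  assumes C_ft: "\<And>G. G \<in> C \<Longrightarrow> CC_ft G \<in> C"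
    and le_l: "\<And>X Y. X \<in> C \<Longrightarrow> Y \<in> C \<Longrightarrow> le X Y \<Longrightarrow> CC_l X = CC_l Y"
    and le_sigma: "\<And>G F. G \<in> C \<Longrightarrow> F \<in> C \<Longrightarrow> CC_l F < CC_l G \<Longrightarrow>
        le (CC_ft G) F \<Longrightarrow> CC_sigma G F \<in> C \<and> le G (CC_sigma G F)"
    and F: "F \<in> C"
  shows "G \<in> C \<Longrightarrow> le ((CC_ft ^^ Suc j) G) F \<Longrightarrow> CC_l F < CC_l G \<Longrightarrow>
      CC_sigma G F \<in> C \<and> le G (CC_sigma G F)"
proof (induction j arbitrary: G)
  case 0
  then show ?case using le_sigma F by simp
next
  case (Suc j)
  show ?case
  proof (cases "CC_l F < CC_l (CC_ft G)")
    case True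
    have "le ((CC_ft ^^ Suc j) (CC_ft G)) F"
      using Suc.prems(2) by (metis comp_apply funpow_Suc_right)
    with Suc.IH C_ft Suc.prems(1) True
    have "CC_sigma (CC_ft G) F \<in> C" and "le (CC_ft G) (CC_sigma (CC_ft G) F)"
      by blast+
    moreover have "CC_l (CC_sigma (CC_ft G) F) < CC_l G"
      using True by (simp add: CC_sigma_def CC_ft_def CC_l_def)
    ultimately show ?thesis
      using le_sigma[OF Suc.prems(1)] CC_sigma_CC_sigma_CC_ft[OF True] by metis
  next
    case False
    have "CC_l ((CC_ft ^^ Suc (Suc j)) G) = CC_l F"
      using le_l funpow_CC_ft_closed[OF C_ft Suc.prems(1)] F Suc.prems(2) by blast
    with False have "(CC_ft ^^ Suc (Suc j)) G = CC_ft G"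
      by (intro funpow_Suc_CC_ft_eq_CC_ft) simp
    then show ?thesis using le_sigma Suc.prems F by simp
  qed
qed

theorem lemma6p7:
  fixes LM :: "nat \<Rightarrow> 'a set"
    and C :: "'a list set"
    and le :: "'a list \<Rightarrow> 'a list \<Rightarrow> bool"
  assumes C_sub: "C \<subseteq> CC_Ob LM"
    and C_ft: "\<And>Gamma. Gamma \<in> C \<Longrightarrow> CC_ft Gamma \<in> C"
    and le_trans: "\<And>X Y Z. X \<in> C \<Longrightarrow> Y \<in> C \<Longrightarrow> Z \<in> C \<Longrightarrow> le X Y \<Longrightarrow> le Y Z \<Longrightarrow> le X Z"
    and le_l: "\<And>X Y. X \<in> C \<Longrightarrow> Y \<in> C \<Longrightarrow> le X Y \<Longrightarrow> CC_l X = CC_l Y"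
    and le_sigma: "\<And>Gamma F. Gamma \<in> C \<Longrightarrow> F \<in> C \<Longrightarrow> CC_l F < CC_l Gamma \<Longrightarrow>
        le (CC_ft Gamma) F \<Longrightarrow> CC_sigma Gamma F \<in> C \<and> le Gamma (CC_sigma Gamma F)"
    and Gamma: "Gamma \<in> C" and F: "F \<in> C"
    and i: "i \<ge> 1" and le_i: "le ((CC_ft ^^ i) Gamma) F"
    and defd: "CC_l F < CC_l Gamma"
  shows "le Gamma (CC_sigma Gamma F)"
proof -
  obtain j where "i = Suc j" using i by (cases i) auto
  then show ?thesis
    using le_CC_sigma_of_le_funpow_CC_ft[OF C_ft le_l le_sigma F Gamma] le_i defd by blast
qed

end
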